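(* Let $g\in C(\mathbb{R},\mathbb{R})$. Then $\mathcal{K}_{(-\infty,g]}=\mathcal{K}_{[g,\infty)}=\{\mathrm{CL}(E):E\in\mathrm{CL}(\mathbb{R})\}$, where $(-\infty,g]=\{f\in C(\mathbb{R},\mathbb{R}):f\le g\}$ and $[g,\infty)=\{f\in C(\mathbb{R},\mathbb{R}):g\le f\}$.
   Context: $f\le g$ means $f(x)\le g(x)$ for all $x\in\mathbb{R}$. For a closed set $E\subseteq\mathbb{R}$, $\mathrm{CL}(E)$ denotes the family of all closed subsets of $E$. For $\mathcal{G}\subseteq C(\mathbb{R},\mathbb{R})$ let $R_\mathcal{G}=\{(f,E)\in C(\mathbb{R},\mathbb{R})\times\mathrm{CL}(\mathbb{R}):(\exists h\in\mathcal{G})\, f\restriction E=h\restriction E\}$; for $\mathcal{F}\subseteq C(\mathbb{R},\mathbb{R})$ put $E_\mathcal{G}(\mathcal{F})=\{E\in\mathrm{CL}(\mathbb{R}):(\forall f\in\mathcal{F})\,(f,E)\in R_\mathcal{G}\}$, and let $\mathcal{K}_\mathcal{G}=\{E_\mathcal{G}(\mathcal{F}):\mathcal{F}\subseteq C(\mathbb{R},\mathbb{R})\}$. *)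

theory Defs
  imports "HOL-Analysis.Analysis"
begin

definition Cfun :: "(real \<Rightarrow> real) set" where
  "Cfun = {f. continuous_on UNIV f}"

definition CL :: "real set \<Rightarrow> real set set" where
  "CL E = {F. closed F \<and> F \<subseteq> E}"

definition R_G :: "(real \<Rightarrow> real) set \<Rightarrow> ((real \<Rightarrow> real) \<times> real set) set" where
  "R_G G = {(f, E). f \<in> Cfun \<and> E \<in> CL UNIV \<and> (\<exists>h\<in>G. \<forall>x\<in>E. f x = h x)}"

definition E_G :: "(real \<Rightarrow> real) set \<Rightarrow> (real \<Rightarrow> real) set \<Rightarrow> real set set" where
  "E_G G F = {E \<in> CL UNIV. \<forall>f\<in>F. (f, E) \<in> R_G G}"

definition K_G :: "(real \<Rightarrow> real) set \<Rightarrow> real set set set" where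
  "K_G G = {E_G G F | F. F \<subseteq> Cfun}"

definition below_fun :: "(real \<Rightarrow> real) \<Rightarrow> (real \<Rightarrow> real) set" where
  "below_fun g = {f \<in> Cfun. \<forall>x. f x \<le> g x}"

definition above_fun :: "(real \<Rightarrow> real) \<Rightarrow> (real \<Rightarrow> real) set" where
  "above_fun g = {f \<in> Cfun. \<forall>x. g x \<le> f x}"

end

theory Submission
  imports Defs
begin

text \<open>
  A continuous \<open>f\<close> agrees on a closed set \<open>E\<close> with some continuous \<open>h \<le> g\<close> iff
  \<open>f \<le> g\<close> on \<open>E\<close>, the witness being \<open>min f g\<close>. Hence \<open>E\<^sub>G(\<F>) = CL(A)\<close> for the closed
  set \<open>A = {x. \<forall>f\<in>\<F>. f x \<le> g x}\<close>, and every closed \<open>E\<close> arises as such an \<open>A\<close> with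
  \<open>\<F> = {g + d}\<close>, where \<open>d \<ge> 0\<close> is continuous with zero set \<open>E\<close>.
  The case \<open>[g,\<infinity>)\<close> reduces to \<open>(-\<infinity>,-g]\<close> via \<open>f \<mapsto> -f\<close>.
\<close>

lemma closed_eq_zero_set:
  fixes S :: "'a::metric_space set"
  assumes "closed S"
  obtains d :: "'a \<Rightarrow> real"
  where "continuous_on UNIV d" "\<And>x. 0 \<le> d x" "\<And>x. d x = 0 \<longleftrightarrow> x \<in> S"
proof (cases "S = {}")
  case True
  then show ?thesis by (intro that[of "\<lambda>_. 1"]) auto
next
  case False
  then show ?thesis
    using assms by (intro that[of "\<lambda>x. infdist x S"])
      (auto intro: continuous_on_infdist continuous_on_id infdist_nonneg
            simp: in_closed_iff_infdist_zero)
qed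

lemma R_G_below_fun_iff:
  assumes "g \<in> Cfun" "f \<in> Cfun" "closed E"
  shows "(f, E) \<in> R_G (below_fun g) \<longleftrightarrow> (\<forall>x\<in>E. f x \<le> g x)"
proof
  assume "(f, E) \<in> R_G (below_fun g)"
  then show "\<forall>x\<in>E. f x \<le> g x"
    unfolding R_G_def below_fun_def by force
next
  assume le: "\<forall>x\<in>E. f x \<le> g x"
  have "(\<lambda>x. min (f x) (g x)) \<in> below_fun g"
    using assms by (auto simp: below_fun_def Cfun_def intro: continuous_on_min)
  moreover have "\<forall>x\<in>E. f x = min (f x) (g x)"
    using le by auto
  ultimately show "(f, E) \<in> R_G (below_fun g)"
    using assms by (auto simp: R_G_def CL_def)
qed

lemma E_G_below_fun:
  assumes "g \<in> Cfun" "F \<subseteq> Cfun"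
  shows "E_G (below_fun g) F = CL {x. \<forall>f\<in>F. f x \<le> g x}"
proof -
  have "(\<forall>f\<in>F. (f, E) \<in> R_G (below_fun g)) \<longleftrightarrow> E \<subseteq> {x. \<forall>f\<in>F. f x \<le> g x}"
    if "closed E" for E
    using assms that R_G_below_fun_iff[OF assms(1)] by blast
  then show ?thesis
    by (auto simp: E_G_def CL_def)
qed

lemma closed_Collect_ball_le:
  assumes "g \<in> Cfun" "F \<subseteq> Cfun"
  shows "closed {x. \<forall>f\<in>F. f x \<le> g x}"
proof -
  have "closed {x. f x \<le> g x}" if "f \<in> F" for f
    using that assms by (intro closed_Collect_le) (auto simp: Cfun_def)
  moreover have "{x. \<forall>f\<in>F. f x \<le> g x} = (\<Inter>f\<in>F. {x. f x \<le> g x})"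
    by auto
  ultimately show ?thesis
    by auto
qed

lemma K_G_below_fun:
  assumes "g \<in> Cfun"
  shows "K_G (below_fun g) = {CL E | E. E \<in> CL UNIV}"
proof (intro equalityI subsetI)
  fix K
  assume "K \<in> K_G (below_fun g)"
  then obtain F where "F \<subseteq> Cfun" "K = E_G (below_fun g) F"
    unfolding K_G_def by blast
  with assms show "K \<in> {CL E | E. E \<in> CL UNIV}"
    by (auto simp: E_G_below_fun closed_Collect_ball_le CL_def[of UNIV])
next
  fix K
  assume "K \<in> {CL E | E. E \<in> CL UNIV}"
  then obtain E where K: "K = CL E" and E: "closed E"
    by (auto simp: CL_def)
  obtain d :: "real \<Rightarrow> real"
    where d: "continuous_on UNIV d" "\<And>x. 0 \<le> d x" "\<And>x. d x = 0 \<longleftrightarrow> x \<in> E"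
    using closed_eq_zero_set[OF E] by blast
  define f where "f x = g x + d x" for x
  have f: "f \<in> Cfun"
    using assms d(1) by (auto simp: f_def Cfun_def intro: continuous_on_add)
  have "f x \<le> g x \<longleftrightarrow> x \<in> E" for x
    using d(2)[of x] d(3)[of x] by (auto simp: f_def)
  then have "{x. \<forall>h\<in>{f}. h x \<le> g x} = E"
    by auto
  with assms f have "E_G (below_fun g) {f} = K"
    by (simp add: E_G_below_fun K)
  with f show "K \<in> K_G (below_fun g)"
    unfolding K_G_def by blast
qed

lemma uminus_fun_in_Cfun_iff: "(\<lambda>x. - f x) \<in> Cfun \<longleftrightarrow> f \<in> Cfun"
  using continuous_on_minus[of UNIV f] continuous_on_minus[of UNIV "\<lambda>x. - f x"]
  by (auto simp: Cfun_def)

lemma R_G_above_fun_iff: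
  "(f, E) \<in> R_G (above_fun g) \<longleftrightarrow> ((\<lambda>x. - f x), E) \<in> R_G (below_fun (\<lambda>x. - g x))"
proof -
  have "(\<exists>h\<in>above_fun g. \<forall>x\<in>E. f x = h x) \<longleftrightarrow>
        (\<exists>h\<in>below_fun (\<lambda>x. - g x). \<forall>x\<in>E. - f x = h x)"
  proof
    assume "\<exists>h\<in>above_fun g. \<forall>x\<in>E. f x = h x"
    then obtain h where "h \<in> above_fun g" "\<forall>x\<in>E. f x = h x" ..
    then show "\<exists>h\<in>below_fun (\<lambda>x. - g x). \<forall>x\<in>E. - f x = h x"
      by (intro bexI[of _ "\<lambda>x. - h x"])
        (auto simp: above_fun_def below_fun_def uminus_fun_in_Cfun_iff)
  next
    assume "\<exists>h\<in>below_fun (\<lambda>x. - g x). \<forall>x\<in>E. - f x = h x"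
    then obtain h where "h \<in> below_fun (\<lambda>x. - g x)" "\<forall>x\<in>E. - f x = h x" ..
    then show "\<exists>h\<in>above_fun g. \<forall>x\<in>E. f x = h x"
      by (intro bexI[of _ "\<lambda>x. - h x"])
        (auto simp: above_fun_def below_fun_def uminus_fun_in_Cfun_iff le_minus_iff)
  qed
  then show ?thesis
    by (simp add: R_G_def uminus_fun_in_Cfun_iff)
qed

lemma K_G_above_fun: "K_G (above_fun g) = K_G (below_fun (\<lambda>x. - g x))"
proof -
  let ?neg = "(`) (\<lambda>f x. - f x) :: (real \<Rightarrow> real) set \<Rightarrow> _"
  have E_G_eq: "E_G (above_fun g) F = E_G (below_fun (\<lambda>x. - g x)) (?neg F)" for F
    by (auto simp: E_G_def R_G_above_fun_iff)
  have neg_neg: "?neg (?neg F) = F" for F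
    by (force simp: image_image)
  have neg_Cfun: "?neg F \<subseteq> Cfun \<longleftrightarrow> F \<subseteq> Cfun" for F
    by (auto simp: uminus_fun_in_Cfun_iff)
  show ?thesis
    unfolding K_G_def by (metis E_G_eq neg_neg neg_Cfun)
qed

theorem corollary3p5:
  fixes g :: "real \<Rightarrow> real"
  assumes "g \<in> Cfun"
  shows "K_G (below_fun g) = K_G (above_fun g) \<and>
         K_G (above_fun g) = {CL E | E. E \<in> CL UNIV}"
proof -
  have "(\<lambda>x. - g x) \<in> Cfun"
    using assms by (simp add: uminus_fun_in_Cfun_iff)
  then show ?thesis
    using assms by (simp add: K_G_above_fun K_G_below_fun)
qed

end
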